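(* Let $H : \mathcal E(2) \rightarrow \mathcal E(4)$ be a chain homotopy between $(23) \circ F$ and $G$ (i.e. $\partial\circ H + H\circ\partial = (23)\circ F + G$) satisfying \begin{equation*} H \circ (12) = (12)(34) \circ H. \end{equation*} Then, for any $\mathcal E$-algebra $A$ and $i \geq 0$, the map $\zeta_i: A \otimes A \to A$ defined by \begin{equation*} \zeta_i(\alpha \otimes \beta) = H(\tilde{x}_i)(\alpha \otimes \alpha \otimes \beta \otimes \beta) \end{equation*} is a Cartan $i$-coboundary, i.e. \begin{equation*} (\partial \zeta_i)(\alpha \otimes \beta) = (\alpha \cup_0 \beta) \cup_i (\alpha \cup_0 \beta) + \sum_{i=j+k} (\alpha \cup_j \alpha) \cup_0 (\beta \cup_k \beta). \end{equation*}
   Context: All constructions are over $\mathbb F_2$. $\mathcal E$ denotes the Barratt-Eccles operad: $\mathcal E(r) = N_*(E(r))$, the normalized chains of the simplicial set $E(r)$ whose $n$-simplices are tuples $(\sigma_0,\dots,\sigma_n)$ of permutations in $\Sigma_r$ (faces delete, degeneracies repeat an entry), with $\Sigma_r$ acting by left multiplication on each entry, and operadic composition $\circ_{\mathcal E} = N_*(\circ_E)\circ EZ^r$, where $\circ_E$ applies composition of permutations coordinatewise and $EZ$ is the Eilenberg-Zilber map. An $\mathcal E$-algebra $A$ is an operad morphism $\mathcal E \to \mathrm{End}(A)$; elements of $\mathcal E$ are identified with their images, and $\partial$ on $\mathrm{Hom}$ complexes is $\partial f = \partial\circ f + f\circ\partial$. Let $\tilde{x}_i = (e, (12), e, \dots,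 (12)^i) \in \mathcal E(2)_i$. The cup-$i$ product on $A$ is $\alpha \cup_i \beta := \tilde{x}_i(\alpha \otimes \beta)$. The chain maps $F, G : \mathcal E(2) \to \mathcal E(4)$ are defined on basis elements by $F(\sigma_0,\dots,\sigma_n) = \circ_{\mathcal E}\big((\sigma_0,\dots,\sigma_n) \otimes \tilde{x}_0 \otimes \tilde{x}_0\big)$ and $G(\sigma_0,\dots,\sigma_n) = \circ_{\mathcal E}\big(\tilde{x}_0 \otimes AW(\sigma_0,\dots,\sigma_n)^{\otimes 2}\big)$, with $AW$ the Alexander-Whitney map applied to the diagonal simplex. *)

theory Defs
  imports "HOL-Combinatorics.Permutations" "HOL-Library.Poly_Mapping" "HOL-Library.Z2"
begin

section \<open>Normalized chains of the Barratt-Eccles simplicial sets, over F_2\<close>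

text \<open>Permutations of {0..<r} (0-indexed), simplices of E(r) are lists (sigma_0,...,sigma_n)
  of permutations; chains are finitely supported F_2-valued functions on simplices.\<close>

type_synonym perm = "nat \<Rightarrow> nat"
type_synonym simp = "perm list"
type_synonym chain = "simp \<Rightarrow>\<^sub>0 bit"

definition nondeg :: "'v list \<Rightarrow> bool" where
  "nondeg s \<longleftrightarrow> (\<forall>i. Suc i < length s \<longrightarrow> s ! i \<noteq> s ! Suc i)"

text \<open>Class of a simplex in the normalized chains (degenerate simplices are zero).\<close>
definition bas :: "simp \<Rightarrow> chain" where
  "bas s = (if nondeg s then Poly_Mapping.single s 1 else 0)"

definition E_basis :: "nat \<Rightarrow> nat \<Rightarrow> simp set" where
  "E_basis r n = {s. length s = Suc n \<and> (\<forall>p\<in>set s. p permutes {..<r}) \<and> nondeg s}"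

definition E_chains :: "nat \<Rightarrow> nat \<Rightarrow> chain set" where
  "E_chains r n = {c. Poly_Mapping.keys c \<subseteq> E_basis r n}"

definition linext :: "(simp \<Rightarrow> 'b::comm_monoid_add) \<Rightarrow> chain \<Rightarrow> 'b" where
  "linext f c = (\<Sum>s\<in>Poly_Mapping.keys c. f s)"

definition del_nth :: "nat \<Rightarrow> 'v list \<Rightarrow> 'v list" where
  "del_nth i s = take i s @ drop (Suc i) s"

definition bdE :: "simp \<Rightarrow> chain" where
  "bdE s = (if length s \<le> 1 then 0 else (\<Sum>i<length s. bas (del_nth i s)))"

definition bdC :: "chain \<Rightarrow> chain" where
  "bdC c = linext bdE c"

definition act :: "perm \<Rightarrow> simp \<Rightarrow> simp" where
  "act \<tau> s = map (\<lambda>\<sigma>. \<tau> \<circ> \<sigma>) s"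

definition actc :: "perm \<Rightarrow> chain \<Rightarrow> chain" where
  "actc \<tau> c = linext (\<lambda>s. bas (act \<tau> s)) c"

text \<open>Composition of permutations in the (associative) permutation operad:
  gam ss sigma taus, where ss = [s_0,...,s_{r-1}] are the arities, sigma in Sigma_r,
  taus!j in Sigma_{s_j}. Output positions are grouped in blocks m = 0..r-1 of size
  s_{sigma m}; position (O_m + k) is sent to o_{sigma m} + tau_{sigma m}(k), where
  o_j is the offset of the j-th input block. This is the convention compatible with the
  action (sigma f)(x_0,...,x_{r-1}) = f(x_{sigma 0},...,x_{sigma (r-1)}) on End(A) below.\<close>
definition gam :: "nat list \<Rightarrow> perm \<Rightarrow> perm list \<Rightarrow> perm" where
  "gam ss \<sigma> \<tau>s p =
     (if p < sum_list ss then
        (let m = (LEAST m. p < (\<Sum>m'<Suc m. ss ! (\<sigma> m')));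
             k = p - (\<Sum>m'<m. ss ! (\<sigma> m'))
         in (\<Sum>i<\<sigma> m. ss ! i) + (\<tau>s ! (\<sigma> m)) k)
      else p)"

text \<open>Binary Eilenberg-Zilber (shuffle) map on simplices, as staircase paths.\<close>
fun ez_paths :: "'a list \<Rightarrow> 'b list \<Rightarrow> ('a \<times> 'b) list list" where
  "ez_paths [] ys = []"
| "ez_paths xs [] = []"
| "ez_paths [a] ys = [map (\<lambda>b. (a, b)) ys]"
| "ez_paths xs [b] = [map (\<lambda>a. (a, b)) xs]"
| "ez_paths (a # a' # xs) (b # b' # ys) =
     map ((#) (a, b)) (ez_paths (a' # xs) (b # b' # ys) @ ez_paths (a # a' # xs) (b' # ys))"

text \<open>Iterated Eilenberg-Zilber map EZ(x_0 (x) EZ(x_1 (x) ...)); vertices of the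
  product are lists (tuples) of vertices.\<close>
fun ez_multi :: "'a list list \<Rightarrow> 'a list list list" where
  "ez_multi [] = [[[]]]"
| "ez_multi (x # xs) =
     concat (map (\<lambda>w. map (map (\<lambda>(v, t). v # t)) (ez_paths x w)) (ez_multi xs))"

text \<open>Operadic composition on basis simplices: a in E(r), bs!j in E(ss!j), r = length ss.
  N(o_E) o EZ^r.\<close>
definition compE :: "nat list \<Rightarrow> simp \<Rightarrow> simp list \<Rightarrow> chain" where
  "compE ss a bs = sum_list (map (\<lambda>w. bas (map (\<lambda>v. gam ss (hd v) (tl v)) w)) (ez_multi (a # bs)))"

definition t12 :: perm where "t12 = Transposition.transpose 0 1"
definition t23 :: perm where "t23 = Transposition.transpose 1 2"
definition t12_34 :: perm where "t12_34 = Transposition.transpose 0 1 \<circ> Transposition.transpose 2 3"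

definition xt :: "nat \<Rightarrow> simp" where
  "xt i = map (\<lambda>m. if even m then id else t12) [0..<Suc i]"

definition Fmap :: "simp \<Rightarrow> chain" where
  "Fmap s = compE [2, 2] s [xt 0, xt 0]"

text \<open>G(s) = o(xt 0 (x) AW(s,s)), AW of the diagonal simplex = sum of front (x) back faces.\<close>
definition Gmap :: "simp \<Rightarrow> chain" where
  "Gmap s = (\<Sum>k<length s. compE [2, 2] (xt 0) [take (Suc k) s, drop k s])"

text \<open>A graded F_2-vector space A = (direct sum of A n) with differential of degree -1.
  The underlying F_2-vector space is an abelian group of exponent 2.\<close>
definition graded_F2_complex :: "(int \<Rightarrow> 'a::ab_group_add set) \<Rightarrow> ('a \<Rightarrow> 'a) \<Rightarrow> bool" where
  "graded_F2_complex A dA \<longleftrightarrow>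
     (\<forall>x::'a. x + x = 0) \<and>
     (\<forall>n. 0 \<in> A n \<and> (\<forall>x\<in>A n. \<forall>y\<in>A n. x + y \<in> A n)) \<and>
     (\<forall>x. \<exists>S c. finite S \<and> (\<forall>n\<in>S. c n \<in> A n) \<and> x = (\<Sum>n\<in>S. c n)) \<and>
     (\<forall>S c. finite S \<and> (\<forall>n\<in>S. c n \<in> A n) \<and> (\<Sum>n\<in>S. c n) = 0 \<longrightarrow> (\<forall>n\<in>S. c n = 0)) \<and>
     (\<forall>x y. dA (x + y) = dA x + dA y) \<and>
     (\<forall>n. \<forall>x\<in>A n. dA x \<in> A (n - 1)) \<and>
     (\<forall>x. dA (dA x) = 0)"

text \<open>Elements of Hom(A^{(x) r}, A) are represented as r-multilinear maps on lists of length r.\<close>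
definition multilin :: "nat \<Rightarrow> ('a::ab_group_add list \<Rightarrow> 'a) \<Rightarrow> bool" where
  "multilin r f \<longleftrightarrow>
     (\<forall>xs j y. length xs = r \<and> j < r \<longrightarrow> f (xs[j := xs ! j + y]) = f xs + f (xs[j := y]))"

definition hom_deg :: "(int \<Rightarrow> 'a set) \<Rightarrow> nat \<Rightarrow> int \<Rightarrow> ('a list \<Rightarrow> 'a) \<Rightarrow> bool" where
  "hom_deg A r d f \<longleftrightarrow>
     (\<forall>xs ns. length xs = r \<and> (\<forall>j<r. xs ! j \<in> A (ns j)) \<longrightarrow> f xs \<in> A ((\<Sum>j<r. ns j) + d))"

definition homd :: "('a::ab_group_add \<Rightarrow> 'a) \<Rightarrow> nat \<Rightarrow> ('a list \<Rightarrow> 'a) \<Rightarrow> 'a list \<Rightarrow> 'a" where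
  "homd dA r f xs = dA (f xs) + (\<Sum>j<r. f (xs[j := dA (xs ! j)]))"

definition phiC :: "(nat \<Rightarrow> simp \<Rightarrow> 'a list \<Rightarrow> 'a::ab_group_add) \<Rightarrow> nat \<Rightarrow> chain \<Rightarrow> 'a list \<Rightarrow> 'a" where
  "phiC \<phi> r c xs = linext (\<lambda>t. \<phi> r t xs) c"

definition block :: "nat list \<Rightarrow> nat \<Rightarrow> 'a list \<Rightarrow> 'a list" where
  "block ss j xs = take (ss ! j) (drop (\<Sum>i<j. ss ! i) xs)"

text \<open>An E-algebra structure: an operad morphism E -> End(A) (arities r >= 1), given on
  basis simplices by phi r s (extended linearly): degree-preserving, chain map,
  Sigma_r-equivariant, compatible with operadic composition and the unit.\<close>
definition E_algebra ::
  "(int \<Rightarrow> 'a::ab_group_add set) \<Rightarrow> ('a \<Rightarrow> 'a) \<Rightarrow> (nat \<Rightarrow> simp \<Rightarrow> 'a list \<Rightarrow> 'a) \<Rightarrow> bool" where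
  "E_algebra A dA \<phi> \<longleftrightarrow>
     graded_F2_complex A dA \<and>
     (\<forall>r\<ge>1. \<forall>n. \<forall>s\<in>E_basis r n. multilin r (\<phi> r s) \<and> hom_deg A r (int n) (\<phi> r s)) \<and>
     (\<forall>r\<ge>1. \<forall>n. \<forall>s\<in>E_basis r n. \<forall>xs. length xs = r \<longrightarrow>
        phiC \<phi> r (bdE s) xs = homd dA r (\<phi> r s) xs) \<and>
     (\<forall>r\<ge>1. \<forall>n. \<forall>s\<in>E_basis r n. \<forall>\<tau>. \<tau> permutes {..<r} \<longrightarrow> (\<forall>xs. length xs = r \<longrightarrow>
        \<phi> r (act \<tau> s) xs = \<phi> r s (map (\<lambda>j. xs ! \<tau> j) [0..<r]))) \<and>
     (\<forall>ss a bs n ms. length ss \<ge> 1 \<and> (\<forall>j<length ss. ss ! j \<ge> 1) \<and>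
        a \<in> E_basis (length ss) n \<and> length bs = length ss \<and>
        (\<forall>j<length ss. bs ! j \<in> E_basis (ss ! j) (ms j)) \<longrightarrow>
        (\<forall>xs. length xs = sum_list ss \<longrightarrow>
           phiC \<phi> (sum_list ss) (compE ss a bs) xs =
           \<phi> (length ss) a (map (\<lambda>j. \<phi> (ss ! j) (bs ! j) (block ss j xs)) [0..<length ss]))) \<and>
     (\<forall>x. \<phi> 1 [id] [x] = x)"

definition cup :: "(nat \<Rightarrow> simp \<Rightarrow> 'a list \<Rightarrow> 'a) \<Rightarrow> nat \<Rightarrow> 'a \<Rightarrow> 'a \<Rightarrow> 'a" where
  "cup \<phi> i a b = \<phi> 2 (xt i) [a, b]"

definition zeta :: "(nat \<Rightarrow> simp \<Rightarrow> 'a::ab_group_add list \<Rightarrow> 'a) \<Rightarrow> (simp \<Rightarrow> chain) \<Rightarrow> nat \<Rightarrow> 'a \<Rightarrow> 'a \<Rightarrow> 'a" where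
  "zeta \<phi> H i a b = phiC \<phi> 4 (H (xt i)) [a, a, b, b]"

end

theory Submission
  imports Defs
begin

text \<open>
  Applying the E-algebra structure to the homotopy relation
  \<open>\<partial>H(x\<^sub>i) = (23)F(x\<^sub>i) + G(x\<^sub>i) + H(\<partial>x\<^sub>i)\<close> and evaluating on \<open>\<alpha> \<otimes> \<alpha> \<otimes> \<beta> \<otimes> \<beta>\<close>
  gives the three terms of the Cartan formula. Since \<open>(23)\<close> turns \<open>\<alpha> \<otimes> \<alpha> \<otimes> \<beta> \<otimes> \<beta>\<close>
  into \<open>\<alpha> \<otimes> \<beta> \<otimes> \<alpha> \<otimes> \<beta>\<close>, the term \<open>(23)F(x\<^sub>i)\<close> yields
  \<open>(\<alpha> \<union>\<^sub>0 \<beta>) \<union>\<^sub>i (\<alpha> \<union>\<^sub>0 \<beta>)\<close>. The Alexander-Whitney faces of \<open>x\<^sub>i\<close> are \<open>x\<^sub>j\<close> and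
  \<open>x\<^sub>i\<^sub>-\<^sub>j\<close> up to a translate by \<open>(12)\<close>, which acts trivially on \<open>\<beta> \<otimes> \<beta>\<close>, so \<open>G(x\<^sub>i)\<close>
  yields the sum. Finally all inner faces of \<open>x\<^sub>i\<close> are degenerate and the two outer
  ones are \<open>(12)x\<^sub>i\<^sub>-\<^sub>1\<close> and \<open>x\<^sub>i\<^sub>-\<^sub>1\<close>; by equivariance \<open>H((12)x\<^sub>i\<^sub>-\<^sub>1) = (12)(34)H(x\<^sub>i\<^sub>-\<^sub>1)\<close>,
  and \<open>(12)(34)\<close> fixes \<open>\<alpha> \<otimes> \<alpha> \<otimes> \<beta> \<otimes> \<beta>\<close>, so the two contributions of \<open>H(\<partial>x\<^sub>i)\<close>
  cancel over \<open>F\<^sub>2\<close>.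
\<close>

lemma bit_add_self [simp]: "(b::bit) + b = 0"
  by (cases b) simp_all

lemma chain_add_self [simp]: "(c::chain) + c = 0"
  by (rule poly_mapping_eqI) (simp add: lookup_add)

lemma chain_add_eq_iff: "(a::chain) + b = c \<longleftrightarrow> a = c + b"
  by (auto simp: add.assoc)

lemma linext_zero [simp]: "linext f 0 = 0"
  by (simp add: linext_def)

lemma linext_bas: "linext f (bas u) = (if nondeg u then f u else 0)"
  by (simp add: bas_def linext_def)

lemma linext_eq_sum_superset:
  assumes "finite S" "Poly_Mapping.keys c \<subseteq> S"
  shows "linext f c = (\<Sum>s\<in>S. if Poly_Mapping.lookup c s = 1 then f s else 0)"
  unfolding linext_def using assms by (intro sum.mono_neutral_cong_left) (auto simp: in_keys_iff)

lemma linext_add: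
  fixes f :: "simp \<Rightarrow> 'b::comm_monoid_add"
  assumes add_self: "\<And>y::'b. y + y = 0"
  shows "linext f (c + d) = linext f c + linext f d"
proof -
  let ?S = "Poly_Mapping.keys c \<union> Poly_Mapping.keys d"
  let ?ext = "\<lambda>c s. if Poly_Mapping.lookup c s = 1 then f s else 0"
  have "?ext (c + d) s = ?ext c s + ?ext d s" for s
    using add_self[of "f s"]
    by (cases "Poly_Mapping.lookup c s"; cases "Poly_Mapping.lookup d s") (simp_all add: lookup_add)
  then show ?thesis
    using keys_add[of c d] by (simp add: linext_eq_sum_superset[of ?S] sum.distrib)
qed

lemma linext_sum:
  fixes f :: "simp \<Rightarrow> 'b::comm_monoid_add"
  assumes "\<And>y::'b. y + y = 0" and "finite K"
  shows "linext f (\<Sum>k\<in>K. c k) = (\<Sum>k\<in>K. linext f (c k))"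
  using assms(2) by induction (simp_all add: linext_add[OF assms(1)])

lemma multilin_zero_entry:
  assumes "multilin r f" "length xs = r" "j < r"
  shows "f (xs[j := 0]) = 0"
  using assms(1)[unfolded multilin_def, rule_format, of "xs[j := 0]" j 0] assms(2,3) by simp

lemma t12_permutes: "t12 permutes {..<2}"
  unfolding t12_def by (rule permutes_swap_id) auto

lemma t12_t12 [simp]: "t12 \<circ> t12 = id"
  by (simp add: t12_def)

lemma t23_permutes: "t23 permutes {..<4}"
  unfolding t23_def by (rule permutes_swap_id) auto

lemma t12_34_permutes: "t12_34 permutes {..<4}"
  unfolding t12_34_def by (intro permutes_compose permutes_swap_id) auto

lemma length_xt [simp]: "length (xt i) = Suc i"
  by (simp add: xt_def)

lemma nth_xt: "m \<le> i \<Longrightarrow> xt i ! m = (if even m then id else t12)"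
  by (simp add: xt_def nth_append del: upt_Suc)

lemma nondeg_xt: "nondeg (xt i)"
proof -
  have "t12 \<noteq> id"
    by (metis id_apply t12_def transpose_apply_first zero_neq_one)
  then show ?thesis
    by (auto simp: nondeg_def nth_xt)
qed

lemma xt_in_E_basis: "xt i \<in> E_basis 2 i"
proof -
  have "p permutes {..<2}" if "p \<in> set (xt i)" for p
    using that t12_permutes permutes_id by (auto simp: xt_def)
  then show ?thesis
    by (simp add: E_basis_def nondeg_xt)
qed

lemma length_act [simp]: "length (act \<tau> s) = length s"
  by (simp add: act_def)

lemma nth_act: "m < length s \<Longrightarrow> act \<tau> s ! m = \<tau> \<circ> s ! m"
  by (simp add: act_def)

lemma nondeg_act: "inj \<tau> \<Longrightarrow> nondeg s \<Longrightarrow> nondeg (act \<tau> s)"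
  by (auto simp: nondeg_def nth_act fun_eq_iff inj_eq)

lemma take_xt: "k \<le> i \<Longrightarrow> take (Suc k) (xt i) = xt k"
  by (simp add: list_eq_iff_nth_eq nth_xt)

lemma drop_xt: "k \<le> i \<Longrightarrow> drop k (xt i) = (if even k then xt (i - k) else act t12 (xt (i - k)))"
  by (auto simp: list_eq_iff_nth_eq nth_xt nth_act)

lemma E_basis_take: "s \<in> E_basis r n \<Longrightarrow> k \<le> n \<Longrightarrow> take (Suc k) s \<in> E_basis r k"
  unfolding E_basis_def nondeg_def by (auto dest: in_set_takeD)

lemma E_basis_drop: "s \<in> E_basis r n \<Longrightarrow> k \<le> n \<Longrightarrow> drop k s \<in> E_basis r (n - k)"
  unfolding E_basis_def nondeg_def by (auto dest: in_set_dropD)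

lemma first_face_xt: "del_nth 0 (xt (Suc m)) = act t12 (xt m)"
  by (auto simp: del_nth_def list_eq_iff_nth_eq nth_xt nth_act)

lemma last_face_xt: "del_nth (Suc m) (xt (Suc m)) = xt m"
  by (simp add: del_nth_def take_xt)

text \<open>Deleting an inner vertex of \<open>x\<^sub>i\<close> leaves two equal neighbours.\<close>

lemma inner_face_xt_degenerate:
  assumes "0 < j" "j < Suc m"
  shows "\<not> nondeg (del_nth j (xt (Suc m)))"
proof -
  obtain j' where j': "j = Suc j'"
    using assms(1) by (cases j) auto
  have "del_nth j (xt (Suc m)) ! j' = del_nth j (xt (Suc m)) ! Suc j'"
    using assms by (simp add: del_nth_def nth_append j' nth_xt)
  moreover have "Suc j' < length (del_nth j (xt (Suc m)))"
    using assms by (simp add: del_nth_def j')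
  ultimately show ?thesis
    unfolding nondeg_def by blast
qed

section \<open>The simplices of \<open>F\<close> lie in the Barratt-Eccles basis\<close>

lemma ez_paths_vertex: "p \<in> set (ez_paths x y) \<Longrightarrow> (a, b) \<in> set p \<Longrightarrow> a \<in> set x \<and> b \<in> set y"
  by (induction x y arbitrary: p rule: ez_paths.induct) auto

lemma ez_paths_nonempty: "p \<in> set (ez_paths x y) \<Longrightarrow> p \<noteq> []"
  by (induction x y arbitrary: p rule: ez_paths.induct) auto

lemma ez_multi_vertex:
  "w \<in> set (ez_multi xs) \<Longrightarrow> v \<in> set w \<Longrightarrow> list_all2 (\<lambda>a x. a \<in> set x) v xs"
proof (induction xs arbitrary: w v)
  case Nil
  then show ?case by simp
next
  case (Cons x xs)
  then obtain w' p where "w' \<in> set (ez_multi xs)" "p \<in> set (ez_paths x w')"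
    and "w = map (\<lambda>(v, t). v # t) p"
    by auto
  with Cons show ?case
    by (force dest: ez_paths_vertex)
qed

lemma ez_multi_nonempty: "w \<in> set (ez_multi xs) \<Longrightarrow> w \<noteq> []"
  by (induction xs arbitrary: w) (auto dest: ez_paths_nonempty)

lemma keys_sum_list: "Poly_Mapping.keys (sum_list cs) \<subseteq> (\<Union>c\<in>set cs. Poly_Mapping.keys c)"
proof (induction cs)
  case (Cons c cs)
  then show ?case
    using keys_add[of c "sum_list cs"] by auto
qed simp

lemma keys_compE:
  assumes "t \<in> Poly_Mapping.keys (compE ss a bs)"
  obtains w where "w \<in> set (ez_multi (a # bs))" "t = map (\<lambda>v. gam ss (hd v) (tl v)) w" "nondeg t"
proof -
  let ?simplex = "\<lambda>w. map (\<lambda>v. gam ss (hd v) (tl v)) w"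
  have "t \<in> (\<Union>c\<in>set (map (\<lambda>w. bas (?simplex w)) (ez_multi (a # bs))). Poly_Mapping.keys c)"
    using keys_sum_list assms unfolding compE_def by (rule subsetD)
  then obtain w where "w \<in> set (ez_multi (a # bs))" "t \<in> Poly_Mapping.keys (bas (?simplex w))"
    by (auto simp del: ez_multi.simps)
  then show thesis
    using that by (auto simp: bas_def split: if_splits)
qed

lemma gam_22_blocks:
  assumes \<sigma>: "\<sigma> permutes {..<2}" and p: "p < 4"
  shows "gam [2,2] \<sigma> [id,id] p = 2 * \<sigma> (p div 2) + p mod 2"
proof -
  have \<sigma>_less: "\<sigma> m < 2" if "m < 2" for m
    using permutes_in_image[OF \<sigma>] that by simp
  have nth_22: "[2::nat,2] ! m = 2" "[id,id] ! m = id" if "m < 2" for m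
    using that by (auto simp: less_2_cases_iff)
  have offset: "(\<Sum>m'<m. [2::nat,2] ! \<sigma> m') = 2 * m" if "m \<le> 2" for m
    using that by (induction m) (simp_all add: nth_22 \<sigma>_less)
  have offset_id: "(\<Sum>m'<m. [2::nat,2] ! m') = 2 * m" if "m \<le> 2" for m
    using that by (induction m) (simp_all add: nth_22)
  have block: "(LEAST m. p < (\<Sum>m'<Suc m. [2::nat,2] ! \<sigma> m')) = p div 2"
  proof (rule Least_equality)
    show "p < (\<Sum>m'<Suc (p div 2). [2::nat,2] ! \<sigma> m')"
      using p by (subst offset) auto
  next
    fix m assume m: "p < (\<Sum>m'<Suc m. [2::nat,2] ! \<sigma> m')"
    show "p div 2 \<le> m"
    proof (cases "Suc m \<le> 2")
      case True
      with m offset[of "Suc m"] have "p < 2 * Suc m"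
        by simp
      then show ?thesis
        by presburger
    next
      case False
      with p show ?thesis
        by presburger
    qed
  qed
  have "\<sigma> (p div 2) < 2"
    using p by (intro \<sigma>_less) simp
  moreover have "p - 2 * (p div 2) = p mod 2"
    by (simp add: minus_mult_div_eq_mod)
  ultimately show ?thesis
    unfolding gam_def Let_def block using p by (simp add: offset offset_id nth_22)
qed

lemma gam_22_permutes:
  assumes \<sigma>: "\<sigma> permutes {..<2}"
  shows "gam [2,2] \<sigma> [id,id] permutes {..<4}"
proof (rule bij_imp_permutes)
  let ?g = "gam [2,2] \<sigma> [id,id]"
  have "inj_on ?g {..<4}"
  proof (rule inj_onI)
    fix p q assume "p \<in> {..<4}" "q \<in> {..<4}" "?g p = ?g q"
    then have "2 * \<sigma> (p div 2) + p mod 2 = 2 * \<sigma> (q div 2) + q mod 2"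
      by (simp add: gam_22_blocks[OF \<sigma>])
    then have "p mod 2 = q mod 2" "\<sigma> (p div 2) = \<sigma> (q div 2)"
      by presburger+
    then show "p = q"
      by (metis div_mult_mod_eq injD permutes_inj[OF \<sigma>])
  qed
  moreover have "?g p < 4" if "p < 4" for p
  proof -
    have "\<sigma> (p div 2) < 2"
      using permutes_in_image[OF \<sigma>, of "p div 2"] that by simp
    with that show ?thesis
      by (simp add: gam_22_blocks[OF \<sigma>])
  qed
  then have "?g ` {..<4} \<subseteq> {..<4}"
    by auto
  ultimately show "bij_betw ?g {..<4} {..<4}"
    by (simp add: bij_betw_def endo_inj_surj)
  show "?g p = p" if "p \<notin> {..<4}" for p
    using that by (simp add: gam_def)
qed

lemma keys_Fmap:
  assumes s: "s \<in> E_basis 2 n"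
  shows "Poly_Mapping.keys (Fmap s) \<subseteq> (\<Union>n. E_basis 4 n)"
proof
  fix t assume "t \<in> Poly_Mapping.keys (Fmap s)"
  then obtain w where w: "w \<in> set (ez_multi [s, [id], [id]])"
    and t: "t = map (\<lambda>v. gam [2,2] (hd v) (tl v)) w" and "nondeg t"
    unfolding Fmap_def xt_def by (auto elim: keys_compE)
  moreover have "p permutes {..<4}" if p: "p \<in> set t" for p
  proof -
    obtain v where "v \<in> set w" "p = gam [2,2] (hd v) (tl v)"
      using p t by auto
    moreover obtain \<sigma> where "v = [\<sigma>, id, id]" "\<sigma> \<in> set s"
      using ez_multi_vertex[OF w \<open>v \<in> set w\<close>] by (auto simp: list_all2_Cons2)
    ultimately show ?thesis
      using s gam_22_permutes by (auto simp: E_basis_def)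
  qed
  moreover have "t \<noteq> []"
    using t ez_multi_nonempty[OF w] by simp
  ultimately have "t \<in> E_basis 4 (length t - 1)"
    by (simp add: E_basis_def)
  then show "t \<in> (\<Union>n. E_basis 4 n)"
    by blast
qed

section \<open>Evaluating chains in an E-algebra\<close>

context
  fixes A :: "int \<Rightarrow> 'a::ab_group_add set" and dA :: "'a \<Rightarrow> 'a"
    and \<phi> :: "nat \<Rightarrow> simp \<Rightarrow> 'a list \<Rightarrow> 'a"
  assumes alg: "E_algebra A dA \<phi>"
begin

lemma E_algebra_add_self [simp]: "x + x = (0::'a)"
  using alg by (simp add: E_algebra_def graded_F2_complex_def)

lemma E_algebra_dA_add: "dA (x + y) = dA x + dA y"
  using alg by (simp add: E_algebra_def graded_F2_complex_def)

lemma E_algebra_dA_sum: "dA (\<Sum>k\<in>K. f k) = (\<Sum>k\<in>K. dA (f k))"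
proof -
  have "dA 0 = 0"
    using E_algebra_dA_add[of 0 0] by simp
  then show ?thesis
    by (induction K rule: infinite_finite_induct) (simp_all add: E_algebra_dA_add)
qed

lemma E_algebra_multilin: "r \<ge> 1 \<Longrightarrow> s \<in> E_basis r n \<Longrightarrow> multilin r (\<phi> r s)"
  using alg by (simp add: E_algebra_def)

lemma E_algebra_bdE:
  "r \<ge> 1 \<Longrightarrow> s \<in> E_basis r n \<Longrightarrow> length xs = r \<Longrightarrow> phiC \<phi> r (bdE s) xs = homd dA r (\<phi> r s) xs"
  using alg by (simp add: E_algebra_def)

lemma E_algebra_act:
  "r \<ge> 1 \<Longrightarrow> s \<in> E_basis r n \<Longrightarrow> \<tau> permutes {..<r} \<Longrightarrow> length xs = r \<Longrightarrow>
    \<phi> r (act \<tau> s) xs = \<phi> r s (map (\<lambda>j. xs ! \<tau> j) [0..<r])"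
  using alg by (simp add: E_algebra_def)

lemma E_algebra_compE:
  assumes "length ss \<ge> 1" "\<forall>j<length ss. ss ! j \<ge> 1" "a \<in> E_basis (length ss) n"
    "length bs = length ss" "\<forall>j<length ss. bs ! j \<in> E_basis (ss ! j) (ms j)" "length xs = sum_list ss"
  shows "phiC \<phi> (sum_list ss) (compE ss a bs) xs =
    \<phi> (length ss) a (map (\<lambda>j. \<phi> (ss ! j) (bs ! j) (block ss j xs)) [0..<length ss])"
  using alg assms unfolding E_algebra_def by blast

lemma phiC_compE_22:
  assumes "a \<in> E_basis 2 n" "b \<in> E_basis 2 m" "c \<in> E_basis 2 k"
  shows "phiC \<phi> 4 (compE [2,2] a [b, c]) [x0, x1, x2, x3] = \<phi> 2 a [\<phi> 2 b [x0, x1], \<phi> 2 c [x2, x3]]"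
proof -
  have "\<forall>j<2. [b, c] ! j \<in> E_basis ([2,2] ! j) (if j = 0 then m else k)" "\<forall>j<2. 1 \<le> [2::nat,2] ! j"
    using assms(2,3) by (auto simp: less_2_cases_iff)
  then show ?thesis
    using assms(1) E_algebra_compE[where ss = "[2,2]" and bs = "[b, c]" and xs = "[x0, x1, x2, x3]"]
    by (simp add: block_def upt_rec eval_nat_numeral)
qed

lemma phiC_add: "phiC \<phi> r (c + d) xs = phiC \<phi> r c xs + phiC \<phi> r d xs"
  unfolding phiC_def by (rule linext_add) simp

lemma phiC_sum: "finite K \<Longrightarrow> phiC \<phi> r (\<Sum>k\<in>K. c k) xs = (\<Sum>k\<in>K. phiC \<phi> r (c k) xs)"
  unfolding phiC_def by (rule linext_sum) simp_all

lemma phiC_bas: "phiC \<phi> r (bas u) xs = (if nondeg u then \<phi> r u xs else 0)"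
  by (simp add: phiC_def linext_bas)

lemma homd_phiC:
  assumes keys: "Poly_Mapping.keys c \<subseteq> (\<Union>n. E_basis r n)" and "r \<ge> 1" "length xs = r"
  shows "homd dA r (phiC \<phi> r c) xs = phiC \<phi> r (bdC c) xs"
proof -
  let ?K = "Poly_Mapping.keys c"
  have "homd dA r (phiC \<phi> r c) xs =
      (\<Sum>t\<in>?K. dA (\<phi> r t xs)) + (\<Sum>j<r. \<Sum>t\<in>?K. \<phi> r t (xs[j := dA (xs ! j)]))"
    by (simp add: homd_def phiC_def linext_def E_algebra_dA_sum)
  also have "\<dots> = (\<Sum>t\<in>?K. homd dA r (\<phi> r t) xs)"
    by (simp add: homd_def sum.distrib sum.swap[where A = "{..<r}"])
  also have "\<dots> = (\<Sum>t\<in>?K. phiC \<phi> r (bdE t) xs)"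
    using keys assms(2,3) by (intro sum.cong) (auto simp: E_algebra_bdE)
  also have "\<dots> = phiC \<phi> r (bdC c) xs"
    by (simp add: bdC_def linext_def phiC_sum)
  finally show ?thesis .
qed

lemma phiC_actc:
  assumes keys: "Poly_Mapping.keys c \<subseteq> (\<Union>n. E_basis r n)"
    and "r \<ge> 1" "\<tau> permutes {..<r}" "length xs = r"
  shows "phiC \<phi> r (actc \<tau> c) xs = phiC \<phi> r c (map (\<lambda>j. xs ! \<tau> j) [0..<r])"
proof -
  have "phiC \<phi> r (bas (act \<tau> t)) xs = \<phi> r t (map (\<lambda>j. xs ! \<tau> j) [0..<r])"
    if t_key: "t \<in> Poly_Mapping.keys c" for t
  proof -
    obtain n where t: "t \<in> E_basis r n"
      using keys t_key by blast
    then have "nondeg (act \<tau> t)"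
      using nondeg_act permutes_inj[OF assms(3)] by (simp add: E_basis_def)
    with t assms(2-4) show ?thesis
      by (simp add: phiC_bas E_algebra_act)
  qed
  then show ?thesis
    by (simp add: actc_def linext_def phiC_sum phiC_def[of _ _ c])
qed

text \<open>For cycles \<open>x\<^sub>j\<close> every summand \<open>f(\<dots>, dx\<^sub>j, \<dots>)\<close> of the Hom differential has a zero entry.\<close>

lemma homd_phiC_cycles:
  assumes keys: "Poly_Mapping.keys c \<subseteq> (\<Union>n. E_basis r n)"
    and cycles: "\<forall>x\<in>set xs. dA x = 0" and len: "length xs = r"
  shows "homd dA r (phiC \<phi> r c) xs = dA (phiC \<phi> r c xs)"
proof -
  have "\<phi> r t (xs[j := dA (xs ! j)]) = 0" if j: "j < r" and t_key: "t \<in> Poly_Mapping.keys c" for j t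
  proof -
    obtain n where "t \<in> E_basis r n"
      using keys t_key by blast
    then have "multilin r (\<phi> r t)"
      using j by (intro E_algebra_multilin) auto
    moreover have "dA (xs ! j) = 0"
      using cycles len j by simp
    ultimately show ?thesis
      using multilin_zero_entry len j by metis
  qed
  then show ?thesis
    by (simp add: homd_def phiC_def linext_def)
qed

lemma phiC_t23_Fmap_xt:
  "phiC \<phi> 4 (actc t23 (Fmap (xt i))) [a, a, b, b] = cup \<phi> i (cup \<phi> 0 a b) (cup \<phi> 0 a b)"
proof -
  have "phiC \<phi> 4 (actc t23 (Fmap (xt i))) [a, a, b, b] = phiC \<phi> 4 (Fmap (xt i)) [a, b, a, b]"
    using phiC_actc[OF keys_Fmap[OF xt_in_E_basis] _ t23_permutes, of "[a, a, b, b]"]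
    by (simp add: upt_rec t23_def transpose_def)
  also have "\<dots> = cup \<phi> i (cup \<phi> 0 a b) (cup \<phi> 0 a b)"
    unfolding Fmap_def cup_def by (rule phiC_compE_22) (rule xt_in_E_basis)+
  finally show ?thesis .
qed

lemma phiC_Gmap_xt:
  "phiC \<phi> 4 (Gmap (xt i)) [a, a, b, b] = (\<Sum>j\<le>i. cup \<phi> 0 (cup \<phi> j a a) (cup \<phi> (i - j) b b))"
proof -
  have "phiC \<phi> 4 (compE [2,2] (xt 0) [take (Suc j) (xt i), drop j (xt i)]) [a, a, b, b]
      = cup \<phi> 0 (cup \<phi> j a a) (cup \<phi> (i - j) b b)" if j: "j \<le> i" for j
  proof -
    have "\<phi> 2 (drop j (xt i)) [b, b] = cup \<phi> (i - j) b b"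
      using drop_xt[OF j] E_algebra_act[OF _ xt_in_E_basis t12_permutes, of "[b, b]"]
      by (simp add: cup_def upt_rec t12_def)
    then show ?thesis
      using phiC_compE_22[OF xt_in_E_basis E_basis_take[OF xt_in_E_basis j] E_basis_drop[OF xt_in_E_basis j]]
      by (simp add: take_xt[OF j] cup_def)
  qed
  then show ?thesis
    by (simp add: Gmap_def phiC_sum lessThan_Suc_atMost del: sum.lessThan_Suc)
qed

lemma phiC_H_bdE_xt:
  assumes H_keys: "\<And>m. Poly_Mapping.keys (H (xt m)) \<subseteq> (\<Union>n. E_basis 4 n)"
    and H_equiv: "\<And>m. H (act t12 (xt m)) = actc t12_34 (H (xt m))"
  shows "phiC \<phi> 4 (linext H (bdE (xt i))) [a, a, b, b] = 0"
proof (cases i)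
  case 0
  then show ?thesis
    by (simp add: bdE_def phiC_def)
next
  case (Suc m)
  let ?term = "\<lambda>j. phiC \<phi> 4 (linext H (bas (del_nth j (xt (Suc m))))) [a, a, b, b]"
  have "phiC \<phi> 4 (linext H (bdE (xt i))) [a, a, b, b] = (\<Sum>j<Suc (Suc m). ?term j)"
    by (simp add: Suc bdE_def linext_sum phiC_sum del: sum.lessThan_Suc)
  also have "\<dots> = (\<Sum>j\<in>{0, Suc m}. ?term j)"
    by (rule sum.mono_neutral_right) (auto simp: inner_face_xt_degenerate linext_bas phiC_def)
  also have "\<dots> = ?term 0 + ?term (Suc m)"
    by simp
  also have "?term 0 = phiC \<phi> 4 (H (xt m)) [a, a, b, b]"
  proof -
    have "nondeg (act t12 (xt m))"
      using nondeg_act[OF permutes_inj[OF t12_permutes] nondeg_xt] .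
    moreover have "phiC \<phi> 4 (actc t12_34 (H (xt m))) [a, a, b, b] = phiC \<phi> 4 (H (xt m)) [a, a, b, b]"
      using phiC_actc[OF H_keys _ t12_34_permutes, of "[a, a, b, b]"]
      by (simp add: upt_rec t12_34_def transpose_def)
    ultimately show ?thesis
      by (simp add: first_face_xt linext_bas H_equiv)
  qed
  also have "?term (Suc m) = phiC \<phi> 4 (H (xt m)) [a, a, b, b]"
    by (simp add: last_face_xt linext_bas nondeg_xt)
  finally show ?thesis
    by simp
qed

end

theorem mainTheorem2:
  fixes H :: "simp \<Rightarrow> chain"
    and A :: "int \<Rightarrow> 'a::ab_group_add set" and dA :: "'a \<Rightarrow> 'a"
    and \<phi> :: "nat \<Rightarrow> simp \<Rightarrow> 'a list \<Rightarrow> 'a"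
    and i :: nat and \<alpha> \<beta> :: 'a
  assumes H_maps: "\<forall>n. \<forall>s\<in>E_basis 2 n. H s \<in> E_chains 4 (Suc n)"
    and H_htpy: "\<forall>n. \<forall>s\<in>E_basis 2 n. bdC (H s) + linext H (bdE s) = actc t23 (Fmap s) + Gmap s"
    and H_equiv: "\<forall>n. \<forall>s\<in>E_basis 2 n. H (act t12 s) = actc t12_34 (H s)"
    and alg: "E_algebra A dA \<phi>"
  shows "homd dA 4 (phiC \<phi> 4 (H (xt i))) [\<alpha>, \<alpha>, \<beta>, \<beta>] =
           cup \<phi> i (cup \<phi> 0 \<alpha> \<beta>) (cup \<phi> 0 \<alpha> \<beta>)
           + (\<Sum>j\<le>i. cup \<phi> 0 (cup \<phi> j \<alpha> \<alpha>) (cup \<phi> (i - j) \<beta> \<beta>))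
       \<and> (dA \<alpha> = 0 \<and> dA \<beta> = 0 \<longrightarrow>
           dA (zeta \<phi> H i \<alpha> \<beta>) =
           cup \<phi> i (cup \<phi> 0 \<alpha> \<beta>) (cup \<phi> 0 \<alpha> \<beta>)
           + (\<Sum>j\<le>i. cup \<phi> 0 (cup \<phi> j \<alpha> \<alpha>) (cup \<phi> (i - j) \<beta> \<beta>)))"
proof -
  have keys: "\<And>m. Poly_Mapping.keys (H (xt m)) \<subseteq> (\<Union>n. E_basis 4 n)"
    using H_maps xt_in_E_basis by (fastforce simp: E_chains_def)
  have equiv: "\<And>m. H (act t12 (xt m)) = actc t12_34 (H (xt m))"
    using H_equiv xt_in_E_basis by blast
  have "bdC (H (xt i)) + linext H (bdE (xt i)) = actc t23 (Fmap (xt i)) + Gmap (xt i)"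
    using H_htpy xt_in_E_basis by blast
  then have bd: "bdC (H (xt i)) = actc t23 (Fmap (xt i)) + Gmap (xt i) + linext H (bdE (xt i))"
    by (rule chain_add_eq_iff[THEN iffD1])
  have "homd dA 4 (phiC \<phi> 4 (H (xt i))) [\<alpha>, \<alpha>, \<beta>, \<beta>] =
      cup \<phi> i (cup \<phi> 0 \<alpha> \<beta>) (cup \<phi> 0 \<alpha> \<beta>) + (\<Sum>j\<le>i. cup \<phi> 0 (cup \<phi> j \<alpha> \<alpha>) (cup \<phi> (i - j) \<beta> \<beta>))"
    by (simp add: homd_phiC[OF alg keys] bd phiC_add[OF alg] phiC_t23_Fmap_xt[OF alg]
        phiC_Gmap_xt[OF alg] phiC_H_bdE_xt[OF alg keys equiv])
  moreover have "dA (zeta \<phi> H i \<alpha> \<beta>) = homd dA 4 (phiC \<phi> 4 (H (xt i))) [\<alpha>, \<alpha>, \<beta>, \<beta>]"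
    if "dA \<alpha> = 0 \<and> dA \<beta> = 0"
    using homd_phiC_cycles[OF alg keys] that by (simp add: zeta_def)
  ultimately show ?thesis
    by simp
qed

end
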